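(* Let $(X,d)$ be a metric space and let $u, u_1, u_2, \ldots \in F_{USC}(X)$. Then $u_n \stackrel{\Gamma}{\longrightarrow} u$ if and only if for all $\alpha \in (0,1]$, $$\overline{\{u>\alpha\}} \subseteq \liminf_{n\to\infty}[u_n]_\alpha \subseteq \limsup_{n\to\infty}[u_n]_\alpha \subseteq [u]_\alpha .$$
   Context: A fuzzy set on $X$ is a function $u:X\to[0,1]$. Its $\alpha$-cuts are $[u]_\alpha=\{x\in X: u(x)\ge\alpha\}$ for $\alpha\in(0,1]$ and $[u]_0=\overline{\{x: u(x)>0\}}$. $F_{USC}(X)$ is the set of fuzzy sets $u$ on $X$ such that $[u]_\alpha$ is a non-empty closed subset of $X$ for every $\alpha\in[0,1]$. For a sequence of sets $C_n\subseteq X$: $\liminf_{n} C_n=\{x\in X: x=\lim_n x_n,\ x_n\in C_n\}$ and $\limsup_n C_n=\{x\in X: x=\lim_j x_{n_j},\ x_{n_j}\in C_{n_j}\text{ for some subsequence}\}$; $C_n$ Kuratowski converges to $C$ if $C=\liminf_n C_n=\limsup_n C_n$. The endograph of $u$ is ${\rm end}\,u=\{(x,t)\in X\times[0,1]: u(x)\ge t\}$, and $X\times[0,1]$ carries the metric $\overline{d}((x,\alpha),(y,\beta))=d(x,y)+|\alpha-\beta|$. We say $u_n$ $\Gamma$-converges to $u$, written $u_n\stackrel{\Gamma}{\longrightarrow}u$, if ${\rm end}\,u_n$ Kuratowski converges to ${\rm end}\,u$ in $(X\times[0,1],\overline{d})$. *)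

theory Defs
  imports "HOL-Analysis.Analysis"
begin

definition acut :: "('a \<Rightarrow> real) \<Rightarrow> real \<Rightarrow> 'a set" where
  "acut u \<alpha> = {x. u x \<ge> \<alpha>}"

definition zcut :: "('a::topological_space \<Rightarrow> real) \<Rightarrow> 'a set" where
  "zcut u = closure {x. u x > 0}"

definition F_USC :: "('a::metric_space \<Rightarrow> real) \<Rightarrow> bool" where
  "F_USC u \<longleftrightarrow> (\<forall>x. 0 \<le> u x \<and> u x \<le> 1)
     \<and> (\<forall>\<alpha>\<in>{0<..1}. acut u \<alpha> \<noteq> {} \<and> closed (acut u \<alpha>))
     \<and> zcut u \<noteq> {} \<and> closed (zcut u)"

definition K_liminf :: "('b \<Rightarrow> 'b \<Rightarrow> real) \<Rightarrow> (nat \<Rightarrow> 'b set) \<Rightarrow> 'b set" where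
  "K_liminf D C = {x. \<exists>xs. (\<forall>n. xs n \<in> C n) \<and> (\<lambda>n. D (xs n) x) \<longlonglongrightarrow> 0}"

definition K_limsup :: "('b \<Rightarrow> 'b \<Rightarrow> real) \<Rightarrow> (nat \<Rightarrow> 'b set) \<Rightarrow> 'b set" where
  "K_limsup D C = {x. \<exists>r xs. strict_mono (r :: nat \<Rightarrow> nat) \<and> (\<forall>j. xs j \<in> C (r j))
                        \<and> (\<lambda>j. D (xs j) x) \<longlonglongrightarrow> 0}"

definition K_conv :: "('b \<Rightarrow> 'b \<Rightarrow> real) \<Rightarrow> (nat \<Rightarrow> 'b set) \<Rightarrow> 'b set \<Rightarrow> bool" where
  "K_conv D C A \<longleftrightarrow> A = K_liminf D C \<and> A = K_limsup D C"

definition endograph :: "('a \<Rightarrow> real) \<Rightarrow> ('a \<times> real) set" where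
  "endograph u = {(x, t). t \<in> {0..1} \<and> u x \<ge> t}"

definition dbar :: "('a::metric_space \<times> real) \<Rightarrow> ('a \<times> real) \<Rightarrow> real" where
  "dbar p q = dist (fst p) (fst q) + \<bar>snd p - snd q\<bar>"

definition Gamma_conv :: "(nat \<Rightarrow> 'a::metric_space \<Rightarrow> real) \<Rightarrow> ('a \<Rightarrow> real) \<Rightarrow> bool" where
  "Gamma_conv us u \<longleftrightarrow> K_conv dbar (\<lambda>n. endograph (us n)) (endograph u)"

end

theory Submission
  imports Defs
begin

text \<open>
  Kuratowski convergence of endographs splits into its two inclusions, and each one is
  transported between endographs and cuts. A point \<open>(x, t)\<close> of \<open>end u\<close> with \<open>t > 0\<close> is
  approached by lifting points of \<open>[u\<^sub>n]\<^bsub>t-\<epsilon>\<^esub>\<close> to height \<open>t - \<epsilon>\<close>;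
  conversely, if \<open>u x > \<alpha>\<close> then points of \<open>end u\<^sub>n\<close> close to \<open>(x, u x)\<close> have height above \<open>\<alpha>\<close>,
  and the closure comes for free because lower Kuratowski limits are closed. A cluster point
  \<open>(x, t)\<close> of the endographs yields cluster points \<open>x\<close> of the cuts at every level
  \<open>\<beta> < t\<close>, so \<open>u x \<ge> \<beta>\<close> for all such \<open>\<beta>\<close>, hence \<open>u x \<ge> t\<close>.
\<close>

lemma K_liminf_subset_K_limsup: "K_liminf D C \<subseteq> K_limsup D C"
  unfolding K_liminf_def K_limsup_def
  by (auto intro!: exI[of _ id] simp: strict_mono_def)

text \<open>All \<open>C n\<close> must be nonempty, not just eventually: \<open>K_liminf\<close> asks for a point in every \<open>C n\<close>.\<close>

lemma mem_K_liminf_iff_eventually: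
  "x \<in> K_liminf D C \<longleftrightarrow>
     (\<forall>n. C n \<noteq> {}) \<and> (\<forall>e>0. \<forall>\<^sub>F n in sequentially. \<exists>y\<in>C n. \<bar>D y x\<bar> < e)"
proof
  assume "x \<in> K_liminf D C"
  then obtain xs where xs: "\<And>n. xs n \<in> C n" "(\<lambda>n. D (xs n) x) \<longlonglongrightarrow> 0"
    unfolding K_liminf_def by auto
  have "\<forall>\<^sub>F n in sequentially. \<exists>y\<in>C n. \<bar>D y x\<bar> < e" if "e > 0" for e
    using tendsto_iff[THEN iffD1, OF xs(2)] that xs(1)
    by (auto elim!: allE[of _ e] eventually_mono)
  with xs(1) show "(\<forall>n. C n \<noteq> {}) \<and> (\<forall>e>0. \<forall>\<^sub>F n in sequentially. \<exists>y\<in>C n. \<bar>D y x\<bar> < e)"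
    by blast
next
  assume nonempty_approx:
    "(\<forall>n. C n \<noteq> {}) \<and> (\<forall>e>0. \<forall>\<^sub>F n in sequentially. \<exists>y\<in>C n. \<bar>D y x\<bar> < e)"
  \<comment> \<open>the approximating sequence consists of near-minimisers of \<open>\<bar>D y x\<bar>\<close> over \<open>C n\<close>\<close>
  define g where "g n = Inf ((\<lambda>y. \<bar>D y x\<bar>) ` C n)" for n
  have bdd: "bdd_below ((\<lambda>y. \<bar>D y x\<bar>) ` C n)" for n
    by (rule bdd_belowI[of _ 0]) auto
  have g_le: "g n \<le> \<bar>D y x\<bar>" if "y \<in> C n" for n y
    unfolding g_def using that bdd by (intro cInf_lower) auto
  have "g \<longlonglongrightarrow> 0"
    unfolding tendsto_iff
  proof (intro allI impI)
    fix e :: real assume "e > 0"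
    with nonempty_approx have "\<forall>\<^sub>F n in sequentially. \<exists>y\<in>C n. \<bar>D y x\<bar> < e" by blast
    then show "\<forall>\<^sub>F n in sequentially. dist (g n) 0 < e"
    proof eventually_elim
      case (elim n)
      then obtain y where "y \<in> C n" "\<bar>D y x\<bar> < e" by blast
      moreover have "0 \<le> g n"
        unfolding g_def using nonempty_approx by (intro cInf_greatest) auto
      ultimately show ?case using g_le by fastforce
    qed
  qed
  have "\<exists>y\<in>C n. \<bar>D y x\<bar> < g n + 1 / (real n + 1)" for n
    using cInf_lessD[of "(\<lambda>y. \<bar>D y x\<bar>) ` C n" "g n + 1 / (real n + 1)"] nonempty_approx
    unfolding g_def by auto
  then obtain xs where xs: "\<And>n. xs n \<in> C n" "\<And>n. \<bar>D (xs n) x\<bar> < g n + 1 / (real n + 1)"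
    by metis
  have bound_lim: "(\<lambda>n. g n + 1 / (real n + 1)) \<longlonglongrightarrow> 0"
    using tendsto_add_zero[OF \<open>g \<longlonglongrightarrow> 0\<close> LIMSEQ_inverse_real_of_nat]
    by (simp add: inverse_eq_divide add.commute)
  have "(\<lambda>n. \<bar>D (xs n) x\<bar>) \<longlonglongrightarrow> 0"
  proof (rule tendsto_sandwich[OF _ _ tendsto_const bound_lim])
    show "\<forall>\<^sub>F n in sequentially. 0 \<le> \<bar>D (xs n) x\<bar>" by simp
    show "\<forall>\<^sub>F n in sequentially. \<bar>D (xs n) x\<bar> \<le> g n + 1 / (real n + 1)"
      using xs(2) by (simp add: less_imp_le)
  qed
  with xs(1) show "x \<in> K_liminf D C"
    unfolding K_liminf_def by (auto simp: tendsto_rabs_zero_iff)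
qed

lemma closed_K_liminf_dist: "closed (K_liminf dist C)"
proof -
  have "x \<in> K_liminf dist C" if "x \<in> closure (K_liminf dist C)" for x
    unfolding mem_K_liminf_iff_eventually
  proof (intro conjI allI impI)
    obtain y where "y \<in> K_liminf dist C"
      using \<open>x \<in> closure _\<close> by (cases "K_liminf dist C = {}") auto
    then show "C n \<noteq> {}" for n
      unfolding mem_K_liminf_iff_eventually by blast
  next
    fix e :: real assume "e > 0"
    then obtain y where y: "y \<in> K_liminf dist C" "dist y x < e/2"
      using \<open>x \<in> closure _\<close> unfolding closure_approachable by (meson half_gt_zero)
    then have "\<forall>\<^sub>F n in sequentially. \<exists>z\<in>C n. dist z y < e/2"
      using half_gt_zero[OF \<open>e > 0\<close>] unfolding mem_K_liminf_iff_eventually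
      by (simp only: abs_of_nonneg[OF zero_le_dist])
    then show "\<forall>\<^sub>F n in sequentially. \<exists>z\<in>C n. \<bar>dist z x\<bar> < e"
    proof eventually_elim
      case (elim n)
      then obtain z where "z \<in> C n" "dist z y < e/2" by blast
      moreover have "dist z x \<le> dist z y + dist y x" by (rule dist_triangle)
      ultimately show ?case using y(2) by (intro bexI[of _ z]) auto
    qed
  qed
  then show ?thesis
    using closure_subset_eq by blast
qed

lemma dbar_tendsto_zero_iff:
  "(\<lambda>j. dbar (ps j) (x, t)) \<longlonglongrightarrow> 0 \<longleftrightarrow>
     (\<lambda>j. fst (ps j)) \<longlonglongrightarrow> x \<and> (\<lambda>j. snd (ps j)) \<longlonglongrightarrow> t"
proof -
  have dbar_eq: "dbar (ps j) (x, t) = dist (fst (ps j)) x + dist (snd (ps j)) t" for j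
    by (simp add: dbar_def dist_real_def)
  have "(\<lambda>j. dbar (ps j) (x, t)) \<longlonglongrightarrow> 0 \<Longrightarrow> (\<lambda>j. dist (fst (ps j)) x) \<longlonglongrightarrow> 0"
    "(\<lambda>j. dbar (ps j) (x, t)) \<longlonglongrightarrow> 0 \<Longrightarrow> (\<lambda>j. dist (snd (ps j)) t) \<longlonglongrightarrow> 0"
    by (rule tendsto_sandwich[of "\<lambda>_. 0" _ _ "\<lambda>j. dbar (ps j) (x, t)"]; simp add: dbar_eq)+
  then show ?thesis
    unfolding dbar_eq tendsto_dist_iff[of "\<lambda>j. fst (ps j)"] tendsto_dist_iff[of "\<lambda>j. snd (ps j)"]
    using tendsto_add_zero by blast
qed

text \<open>\<open>u \<le> 1\<close> is needed because \<open>endograph\<close> only contains heights in \<open>[0, 1]\<close>.\<close>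

lemma strict_cut_subset_K_liminf_cut:
  assumes endo: "endograph u \<subseteq> K_liminf dbar (\<lambda>n. endograph (us n))"
    and le1: "\<And>x. u x \<le> 1" and "0 < \<alpha>" and nonempty: "\<And>n. acut (us n) \<alpha> \<noteq> {}"
  shows "{x. u x > \<alpha>} \<subseteq> K_liminf dist (\<lambda>n. acut (us n) \<alpha>)"
proof
  fix x assume "x \<in> {x. u x > \<alpha>}"
  then have "u x > \<alpha>" by simp
  with \<open>0 < \<alpha>\<close> le1 endo have "(x, u x) \<in> K_liminf dbar (\<lambda>n. endograph (us n))"
    by (auto simp: endograph_def)
  show "x \<in> K_liminf dist (\<lambda>n. acut (us n) \<alpha>)"
    unfolding mem_K_liminf_iff_eventually
  proof (intro conjI allI impI nonempty)
    fix e :: real assume "e > 0"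
    with \<open>u x > \<alpha>\<close> have "min e (u x - \<alpha>) > 0" by simp
    with \<open>(x, u x) \<in> K_liminf _ _\<close>
    have "\<forall>\<^sub>F n in sequentially. \<exists>p\<in>endograph (us n). \<bar>dbar p (x, u x)\<bar> < min e (u x - \<alpha>)"
      unfolding mem_K_liminf_iff_eventually by blast
    then show "\<forall>\<^sub>F n in sequentially. \<exists>y\<in>acut (us n) \<alpha>. \<bar>dist y x\<bar> < e"
    proof eventually_elim
      case (elim n)
      then obtain y s where "us n y \<ge> s" "dist y x + \<bar>s - u x\<bar> < min e (u x - \<alpha>)"
        by (auto simp: endograph_def dbar_def)
      then have "\<alpha> \<le> us n y" "dist y x < e"
        using zero_le_dist[of y x] by arith+
      then show ?case by (auto simp: acut_def)
    qed
  qed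
qed

lemma K_limsup_cut_subset_cut:
  assumes "K_limsup dbar (\<lambda>n. endograph (us n)) \<subseteq> endograph u" and "\<alpha> \<in> {0..1}"
  shows "K_limsup dist (\<lambda>n. acut (us n) \<alpha>) \<subseteq> acut u \<alpha>"
proof
  fix x assume "x \<in> K_limsup dist (\<lambda>n. acut (us n) \<alpha>)"
  then obtain r xs where r: "strict_mono r" "\<And>j. xs j \<in> acut (us (r j)) \<alpha>"
    "(\<lambda>j. dist (xs j) x) \<longlonglongrightarrow> 0"
    unfolding K_limsup_def by auto
  have "(\<lambda>j. dbar (xs j, \<alpha>) (x, \<alpha>)) \<longlonglongrightarrow> 0"
    using r(3) unfolding dbar_tendsto_zero_iff by (simp add: tendsto_dist_iff[of xs])
  moreover have "(xs j, \<alpha>) \<in> endograph (us (r j))" for j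
    using r(2)[of j] \<open>\<alpha> \<in> {0..1}\<close> by (simp add: endograph_def acut_def)
  ultimately have "(x, \<alpha>) \<in> K_limsup dbar (\<lambda>n. endograph (us n))"
    unfolding K_limsup_def using r(1)
    by (intro CollectI exI[of _ r] exI[of _ "\<lambda>j. (xs j, \<alpha>)"]) simp
  with assms(1) show "x \<in> acut u \<alpha>"
    by (auto simp: endograph_def acut_def)
qed

lemma endograph_subset_K_liminf:
  assumes nonneg: "\<And>n x. 0 \<le> us n x"
    and cut: "\<And>\<beta>. \<beta> \<in> {0<..1} \<Longrightarrow> {x. u x > \<beta>} \<subseteq> K_liminf dist (\<lambda>n. acut (us n) \<beta>)"
  shows "endograph u \<subseteq> K_liminf dbar (\<lambda>n. endograph (us n))"
proof (clarify)
  fix x t assume "(x, t) \<in> endograph u"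
  then have t: "0 \<le> t" "t \<le> 1" "t \<le> u x" by (auto simp: endograph_def)
  have bottom: "(y, 0) \<in> endograph (us n)" for y n
    using nonneg by (simp add: endograph_def)
  show "(x, t) \<in> K_liminf dbar (\<lambda>n. endograph (us n))"
    unfolding mem_K_liminf_iff_eventually
  proof (intro conjI allI impI)
    show "endograph (us n) \<noteq> {}" for n
      using bottom by blast
  next
    fix e :: real assume "e > 0"
    show "\<forall>\<^sub>F n in sequentially. \<exists>p\<in>endograph (us n). \<bar>dbar p (x, t)\<bar> < e"
    proof (cases "t < e")
      case True
      then have "\<bar>dbar (x, 0) (x, t)\<bar> < e" using t by (simp add: dbar_def)
      with bottom show ?thesis by (blast intro: always_eventually)
    next
      case False
      define \<beta> where "\<beta> = t - e/2"
      have "\<beta> \<in> {0<..1}" "u x > \<beta>"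
        using False t \<open>e > 0\<close> by (auto simp: \<beta>_def)
      with cut have "x \<in> K_liminf dist (\<lambda>n. acut (us n) \<beta>)" by blast
      then have "\<forall>\<^sub>F n in sequentially. \<exists>y\<in>acut (us n) \<beta>. \<bar>dist y x\<bar> < e/2"
        using half_gt_zero[OF \<open>e > 0\<close>] unfolding mem_K_liminf_iff_eventually by blast
      then show ?thesis
      proof eventually_elim
        case (elim n)
        then obtain y where "y \<in> acut (us n) \<beta>" "dist y x < e/2" by auto
        with \<open>\<beta> \<in> {0<..1}\<close> \<open>e > 0\<close> have "(y, \<beta>) \<in> endograph (us n)" "\<bar>dbar (y, \<beta>) (x, t)\<bar> < e"
          by (auto simp: acut_def endograph_def dbar_def \<beta>_def)
        then show ?case by blast
      qed
    qed
  qed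
qed

lemma K_limsup_endograph_imp_K_limsup_cut:
  assumes "(x, t) \<in> K_limsup dbar (\<lambda>n. endograph (us n))" and "\<beta> < t"
  shows "x \<in> K_limsup dist (\<lambda>n. acut (us n) \<beta>)"
proof -
  obtain r ps where r: "strict_mono r" "\<And>j. ps j \<in> endograph (us (r j))"
    and "(\<lambda>j. dbar (ps j) (x, t)) \<longlonglongrightarrow> 0"
    using assms(1) unfolding K_limsup_def by auto
  then have lim: "(\<lambda>j. fst (ps j)) \<longlonglongrightarrow> x" "(\<lambda>j. snd (ps j)) \<longlonglongrightarrow> t"
    by (simp_all add: dbar_tendsto_zero_iff)
  obtain J where J: "\<And>j. j \<ge> J \<Longrightarrow> \<beta> < snd (ps j)"
    using order_tendstoD(1)[OF lim(2) \<open>\<beta> < t\<close>] unfolding eventually_sequentially by blast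
  have "strict_mono (\<lambda>j. r (j + J))"
    using r(1) by (simp add: strict_mono_def)
  moreover have "fst (ps (j + J)) \<in> acut (us (r (j + J))) \<beta>" for j
    using r(2)[of "j + J"] J[of "j + J"] by (auto simp: endograph_def acut_def split: prod.splits)
  moreover have "(\<lambda>j. dist (fst (ps (j + J))) x) \<longlonglongrightarrow> 0"
    using tendsto_dist_iff[THEN iffD1, OF LIMSEQ_ignore_initial_segment[OF lim(1), of J]] by simp
  ultimately show ?thesis
    unfolding K_limsup_def mem_Collect_eq
    by (intro exI[of _ "\<lambda>j. r (j + J)"] exI[of _ "\<lambda>j. fst (ps (j + J))"]) simp
qed

lemma K_limsup_endograph_snd_mem:
  assumes "(x, t) \<in> K_limsup dbar (\<lambda>n. endograph (us n))"
  shows "t \<in> {0..1}"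
proof -
  obtain r ps where ps: "\<And>j. ps j \<in> endograph (us (r j))" "(\<lambda>j. dbar (ps j) (x, t)) \<longlonglongrightarrow> 0"
    using assms unfolding K_limsup_def by auto
  have "snd (ps j) \<in> {0..1}" for j
    using ps(1)[of j] by (cases "ps j") (simp add: endograph_def)
  moreover have "(\<lambda>j. snd (ps j)) \<longlonglongrightarrow> t"
    using ps(2) by (simp add: dbar_tendsto_zero_iff)
  ultimately show ?thesis
    by (rule closed_sequentially[OF closed_atLeastAtMost])
qed

lemma K_limsup_endograph_subset:
  assumes nonneg: "\<And>x. 0 \<le> u x"
    and cut: "\<And>\<beta>. \<beta> \<in> {0<..1} \<Longrightarrow> K_limsup dist (\<lambda>n. acut (us n) \<beta>) \<subseteq> acut u \<beta>"
  shows "K_limsup dbar (\<lambda>n. endograph (us n)) \<subseteq> endograph u"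
proof (clarify)
  fix x t assume xt: "(x, t) \<in> K_limsup dbar (\<lambda>n. endograph (us n))"
  then have t: "t \<in> {0..1}" by (rule K_limsup_endograph_snd_mem)
  have "t \<le> u x"
  proof (cases "t = 0")
    case True
    with nonneg show ?thesis by simp
  next
    case False
    with t have "0 < t" by simp
    then show ?thesis
    proof (rule dense_le_bounded)
      fix \<beta> assume "0 < \<beta>" "\<beta> < t"
      with t have "\<beta> \<in> {0<..1}" by simp
      moreover have "x \<in> K_limsup dist (\<lambda>n. acut (us n) \<beta>)"
        using xt \<open>\<beta> < t\<close> by (rule K_limsup_endograph_imp_K_limsup_cut)
      ultimately show "\<beta> \<le> u x"
        using cut by (auto simp: acut_def)
    qed
  qed
  with t show "(x, t) \<in> endograph u"
    by (simp add: endograph_def)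
qed

theorem theorem3p4:
  fixes u :: "'a::metric_space \<Rightarrow> real" and us :: "nat \<Rightarrow> 'a \<Rightarrow> real"
  assumes "F_USC u" and "\<And>n. F_USC (us n)"
  shows "Gamma_conv us u \<longleftrightarrow>
    (\<forall>\<alpha>\<in>{0<..1}.
       closure {x. u x > \<alpha>} \<subseteq> K_liminf dist (\<lambda>n. acut (us n) \<alpha>)
     \<and> K_liminf dist (\<lambda>n. acut (us n) \<alpha>) \<subseteq> K_limsup dist (\<lambda>n. acut (us n) \<alpha>)
     \<and> K_limsup dist (\<lambda>n. acut (us n) \<alpha>) \<subseteq> acut u \<alpha>)"
    (is "_ \<longleftrightarrow> (\<forall>\<alpha>\<in>{0<..1}. ?cuts \<alpha>)")
proof -
  have u_range: "0 \<le> u x" "u x \<le> 1" for x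
    using assms(1) by (simp_all add: F_USC_def)
  have us_nonneg: "0 \<le> us n x" for n x
    using assms(2)[of n] by (simp add: F_USC_def)
  have cut_nonempty: "acut (us n) \<alpha> \<noteq> {}" if "\<alpha> \<in> {0<..1}" for n \<alpha>
    using assms(2)[of n] that by (simp add: F_USC_def)
  show ?thesis
  proof
    assume "Gamma_conv us u"
    then have liminf: "endograph u \<subseteq> K_liminf dbar (\<lambda>n. endograph (us n))"
      and limsup: "K_limsup dbar (\<lambda>n. endograph (us n)) \<subseteq> endograph u"
      unfolding Gamma_conv_def K_conv_def by auto
    show "\<forall>\<alpha>\<in>{0<..1}. ?cuts \<alpha>"
    proof (intro ballI conjI K_liminf_subset_K_limsup)
      fix \<alpha> :: real assume \<alpha>: "\<alpha> \<in> {0<..1}"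
      show "closure {x. u x > \<alpha>} \<subseteq> K_liminf dist (\<lambda>n. acut (us n) \<alpha>)"
        using \<alpha> strict_cut_subset_K_liminf_cut[OF liminf u_range(2) _ cut_nonempty]
        by (intro closure_minimal closed_K_liminf_dist) simp
      show "K_limsup dist (\<lambda>n. acut (us n) \<alpha>) \<subseteq> acut u \<alpha>"
        using \<alpha> by (intro K_limsup_cut_subset_cut[OF limsup]) simp
    qed
  next
    assume cuts: "\<forall>\<alpha>\<in>{0<..1}. ?cuts \<alpha>"
    then have "endograph u \<subseteq> K_liminf dbar (\<lambda>n. endograph (us n))"
      by (intro endograph_subset_K_liminf us_nonneg) (meson closure_subset subset_trans)
    moreover from cuts have "K_limsup dbar (\<lambda>n. endograph (us n)) \<subseteq> endograph u"
      by (intro K_limsup_endograph_subset u_range) blast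
    ultimately show "Gamma_conv us u"
      unfolding Gamma_conv_def K_conv_def
      using K_liminf_subset_K_limsup[of dbar "\<lambda>n. endograph (us n)"] by blast
  qed
qed

end
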